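(* Let $p$ be a design on a set $\Omega\subseteq\{0,1\}^n$ of treatment vectors, with $p(\mathbf z)=P(\mathbf Z=\mathbf z)$. Each unit $i$ has exposure levels $\mathcal E_i=\{0,\dots,K_i-1\}$ and exposure $e_i=f(\mathbf z_{N_i})$, and potential outcomes $Y_i(z,e)$, $(z,e)\in\{0,1\}\times\mathcal E_i$. Fix $(z_1,e_1)\ne(z_0,e_0)$ in $\{0,1\}\times\mathcal E_i$ for all $i$, and let $\theta=\frac1n\sum_i\big(Y_i(z_1,e_1)-Y_i(z_0,e_0)\big)$. For each unit $i$ and $(z,e)$ let $\Omega_i(z,e)=\{\mathbf z\in\Omega:z_i=z,\ f(\mathbf z_{N_i})=e\}$ and $\pi_i(z,e)=\sum_{\mathbf z\in\Omega_i(z,e)}p(\mathbf z)$. Let weight functions $w_i:\Omega\to\mathbb R$ be given and $\hat\theta=\sum_iw_i(\mathbf Z)Y_i^{obs}$. Then $\mathbb E[\hat\theta]=\theta$ holds for every choice of the real numbers $\{Y_i(z,e)\}$ if and only if $0<\pi_i(z_1,e_1)<1$ and $0<\pi_i(z_0,e_0)<1$ for all $i$, and the weights satisfy, for all $i=1,\dots,n$, $$\sum_{\mathbf z\in\Omega_i(z_1,e_1)}w_i(\mathbf z)p(\mathbf z)=\frac1n,\qquad \sum_{\mathbf z\in\Omega_i(z_0,e_0)}w_i(\mathbf z)p(\mathbf z)=-\frac1n,$$ $$\sum_{\mathbf z\in\Omega_i(z,e)}w_i(\mathbf z)p(\mathbf z)=0\quad\text{for all }(z,e)\notin\{(z_0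,e_0),(z_1,e_1)\}.$$
   Context: Units $1,\dots,n$ each have an interference neighborhood $N_i\subseteq\{1,\dots,n\}\setminus\{i\}$ (e.g. induced by an interference graph) and an exposure function $f$ mapping $\{0,1\}^{N_i}$ onto $\mathcal E_i$. The observed outcome is $Y_i^{obs}=Y_i(Z_i,f(\mathbf Z_{N_i}))$. "No structural assumptions" means unbiasedness must hold for every table of potential outcomes. *)

theory Defs
  imports Complex_Main
begin

text \<open>Units are 0,...,n-1. A treatment vector in {0,1}^n is a function nat => nat
  with values in {0,1} on the units and value 0 elsewhere (extensional).\<close>
definition treatment_vectors :: "nat \<Rightarrow> (nat \<Rightarrow> nat) set" where
  "treatment_vectors n = {z. (\<forall>i<n. z i \<le> 1) \<and> (\<forall>i. n \<le> i \<longrightarrow> z i = 0)}"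

definition Omega_i :: "(nat \<Rightarrow> nat) set \<Rightarrow> (nat \<Rightarrow> (nat \<Rightarrow> nat) \<Rightarrow> nat)
    \<Rightarrow> nat \<Rightarrow> nat \<Rightarrow> nat \<Rightarrow> (nat \<Rightarrow> nat) set" where
  "Omega_i \<Omega> f i z e = {zz \<in> \<Omega>. zz i = z \<and> f i zz = e}"

definition pi_i :: "(nat \<Rightarrow> nat) set \<Rightarrow> ((nat \<Rightarrow> nat) \<Rightarrow> real) \<Rightarrow> (nat \<Rightarrow> (nat \<Rightarrow> nat) \<Rightarrow> nat)
    \<Rightarrow> nat \<Rightarrow> nat \<Rightarrow> nat \<Rightarrow> real" where
  "pi_i \<Omega> p f i z e = (\<Sum>zz\<in>Omega_i \<Omega> f i z e. p zz)"

definition expected_estimate :: "nat \<Rightarrow> (nat \<Rightarrow> nat) set \<Rightarrow> ((nat \<Rightarrow> nat) \<Rightarrow> real)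
    \<Rightarrow> (nat \<Rightarrow> (nat \<Rightarrow> nat) \<Rightarrow> nat) \<Rightarrow> (nat \<Rightarrow> (nat \<Rightarrow> nat) \<Rightarrow> real)
    \<Rightarrow> (nat \<Rightarrow> nat \<Rightarrow> nat \<Rightarrow> real) \<Rightarrow> real" where
  "expected_estimate n \<Omega> p f w Y =
     (\<Sum>zz\<in>\<Omega>. p zz * (\<Sum>i<n. w i zz * Y i (zz i) (f i zz)))"

definition estimand :: "nat \<Rightarrow> (nat \<Rightarrow> nat \<Rightarrow> nat \<Rightarrow> real) \<Rightarrow> nat \<Rightarrow> nat \<Rightarrow> nat \<Rightarrow> nat \<Rightarrow> real" where
  "estimand n Y z1 e1 z0 e0 = (1 / real n) * (\<Sum>i<n. Y i z1 e1 - Y i z0 e0)"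

end

theory Submission
  imports Defs
begin

text \<open>Grouping the treatment vectors by the pair (own treatment, exposure) of unit i shows that the
  expectation of the estimator is a linear form in the potential outcomes whose coefficient at
  Y_i(z,e) is the weighted mass of the design on Omega_i(z,e). The estimand is a linear form as well,
  and two linear forms agree for all outcome tables iff their coefficients agree, as indicator tables
  show. A nonzero coefficient forces positive design mass, and Omega_i(z1,e1), Omega_i(z0,e0) are
  disjoint, which yields 0 < pi_i < 1.\<close>

lemma finite_treatment_vectors: "finite (treatment_vectors n)"
proof -
  have "treatment_vectors n = {z. \<forall>i. (i \<in> {..<n} \<longrightarrow> z i \<in> {..1}) \<and> (i \<notin> {..<n} \<longrightarrow> z i = 0)}"
    by (simp add: treatment_vectors_def all_conj_distrib not_less)
  then show ?thesis
    using finite_set_of_finite_funs[of "{..<n}" "{..1::nat}" 0] by simp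
qed

lemma sum_pairs_linear_form_eq_iff:
  fixes c d :: "'i \<Rightarrow> 'a \<Rightarrow> 'b \<Rightarrow> 'r::comm_ring_1"
  assumes "finite I" and "\<And>i. i \<in> I \<Longrightarrow> finite (S i)"
  shows "(\<forall>Y. (\<Sum>i\<in>I. \<Sum>(a, b)\<in>S i. Y i a b * c i a b) = (\<Sum>i\<in>I. \<Sum>(a, b)\<in>S i. Y i a b * d i a b))
    \<longleftrightarrow> (\<forall>i\<in>I. \<forall>(a, b)\<in>S i. c i a b = d i a b)"
proof
  assume eq: "\<forall>Y. (\<Sum>i\<in>I. \<Sum>(a, b)\<in>S i. Y i a b * c i a b) = (\<Sum>i\<in>I. \<Sum>(a, b)\<in>S i. Y i a b * d i a b)"
  have indicator_picks: "(\<Sum>j\<in>I. \<Sum>(a', b')\<in>S j. (if j = i \<and> a' = a \<and> b' = b then 1 else 0) * g j a' b') = g i a b"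
    if "i \<in> I" "(a, b) \<in> S i" for i a b and g :: "'i \<Rightarrow> 'a \<Rightarrow> 'b \<Rightarrow> 'r"
  proof -
    have "(\<Sum>j\<in>I. \<Sum>(a', b')\<in>S j. (if j = i \<and> a' = a \<and> b' = b then 1 else 0) * g j a' b')
        = (\<Sum>j\<in>I. if j = i then (\<Sum>s\<in>S j. if s = (a, b) then g j a b else 0) else 0)"
      by (intro sum.cong refl) (auto intro: sum.cong)
    also have "\<dots> = g i a b"
      using that assms by simp
    finally show ?thesis .
  qed
  show "\<forall>i\<in>I. \<forall>(a, b)\<in>S i. c i a b = d i a b"
  proof (intro ballI, clarify)
    fix i a b assume "i \<in> I" "(a, b) \<in> S i"
    then show "c i a b = d i a b"
      using eq[rule_format, of "\<lambda>j a' b'. if j = i \<and> a' = a \<and> b' = b then 1 else 0"]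
      by (simp only: indicator_picks)
  qed
next
  assume "\<forall>i\<in>I. \<forall>(a, b)\<in>S i. c i a b = d i a b"
  then show "\<forall>Y. (\<Sum>i\<in>I. \<Sum>(a, b)\<in>S i. Y i a b * c i a b) = (\<Sum>i\<in>I. \<Sum>(a, b)\<in>S i. Y i a b * d i a b)"
    by (intro allI sum.cong refl) (auto split: prod.splits)
qed

definition exposure_weight_mass ::
    "(nat \<Rightarrow> nat) set \<Rightarrow> ((nat \<Rightarrow> nat) \<Rightarrow> real) \<Rightarrow> (nat \<Rightarrow> (nat \<Rightarrow> nat) \<Rightarrow> nat)
      \<Rightarrow> (nat \<Rightarrow> (nat \<Rightarrow> nat) \<Rightarrow> real) \<Rightarrow> nat \<Rightarrow> nat \<Rightarrow> nat \<Rightarrow> real" where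
  "exposure_weight_mass \<Omega> p f w i z e = (\<Sum>zz\<in>Omega_i \<Omega> f i z e. w i zz * p zz)"

definition contrast_coeff :: "nat \<Rightarrow> nat \<Rightarrow> nat \<Rightarrow> nat \<Rightarrow> nat \<Rightarrow> nat \<Rightarrow> nat \<Rightarrow> real" where
  "contrast_coeff n z1 e1 z0 e0 z e =
     (if (z, e) = (z1, e1) then 1 / real n else 0) - (if (z, e) = (z0, e0) then 1 / real n else 0)"

lemma expected_estimate_eq_sum_exposure_weight_mass:
  assumes "finite \<Omega>"
    and "\<And>i. i < n \<Longrightarrow> finite (S i)"
    and "\<And>i zz. i < n \<Longrightarrow> zz \<in> \<Omega> \<Longrightarrow> (zz i, f i zz) \<in> S i"
  shows "expected_estimate n \<Omega> p f w Y
    = (\<Sum>i<n. \<Sum>(z, e)\<in>S i. Y i z e * exposure_weight_mass \<Omega> p f w i z e)"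
proof -
  have "expected_estimate n \<Omega> p f w Y = (\<Sum>i<n. \<Sum>zz\<in>\<Omega>. Y i (zz i) (f i zz) * (w i zz * p zz))"
    unfolding expected_estimate_def
    by (subst sum.swap) (simp add: sum_distrib_left ac_simps)
  also have "\<dots> = (\<Sum>i<n. \<Sum>(z, e)\<in>S i. Y i z e * exposure_weight_mass \<Omega> p f w i z e)"
  proof (rule sum.cong[OF refl])
    fix i assume "i \<in> {..<n}"
    then have "(\<Sum>zz\<in>\<Omega>. Y i (zz i) (f i zz) * (w i zz * p zz))
        = (\<Sum>ze\<in>S i. \<Sum>zz\<in>{zz\<in>\<Omega>. (zz i, f i zz) = ze}. Y i (zz i) (f i zz) * (w i zz * p zz))"
      using assms by (intro sum.group[symmetric]) auto
    also have "\<dots> = (\<Sum>(z, e)\<in>S i. Y i z e * exposure_weight_mass \<Omega> p f w i z e)"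
      unfolding exposure_weight_mass_def Omega_i_def
      by (intro sum.cong refl) (auto simp: sum_distrib_left intro: sum.cong)
    finally show "(\<Sum>zz\<in>\<Omega>. Y i (zz i) (f i zz) * (w i zz * p zz))
        = (\<Sum>(z, e)\<in>S i. Y i z e * exposure_weight_mass \<Omega> p f w i z e)" .
  qed
  finally show ?thesis .
qed

lemma estimand_eq_sum_contrast_coeff:
  assumes "\<And>i. i < n \<Longrightarrow> finite (S i)"
    and "\<And>i. i < n \<Longrightarrow> (z1, e1) \<in> S i \<and> (z0, e0) \<in> S i"
  shows "estimand n Y z1 e1 z0 e0 = (\<Sum>i<n. \<Sum>(z, e)\<in>S i. Y i z e * contrast_coeff n z1 e1 z0 e0 z e)"
proof -
  have "(\<Sum>(z, e)\<in>S i. Y i z e * contrast_coeff n z1 e1 z0 e0 z e) = (Y i z1 e1 - Y i z0 e0) / real n"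
    if "i < n" for i
  proof -
    have "(\<Sum>(z, e)\<in>S i. Y i z e * contrast_coeff n z1 e1 z0 e0 z e)
        = (\<Sum>s\<in>S i. if s = (z1, e1) then Y i z1 e1 / real n else 0)
          - (\<Sum>s\<in>S i. if s = (z0, e0) then Y i z0 e0 / real n else 0)"
      unfolding sum_subtractf[symmetric]
      by (intro sum.cong refl) (auto simp: contrast_coeff_def split: if_splits)
    also have "\<dots> = (Y i z1 e1 - Y i z0 e0) / real n"
      using assms that by (simp add: diff_divide_distrib)
    finally show ?thesis .
  qed
  then show ?thesis
    unfolding estimand_def by (simp add: sum_divide_distrib)
qed

lemma unbiased_iff_exposure_weight_mass_eq_contrast_coeff:
  assumes "finite \<Omega>"
    and "\<And>i. i < n \<Longrightarrow> finite (S i)"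
    and "\<And>i zz. i < n \<Longrightarrow> zz \<in> \<Omega> \<Longrightarrow> (zz i, f i zz) \<in> S i"
    and "\<And>i. i < n \<Longrightarrow> (z1, e1) \<in> S i \<and> (z0, e0) \<in> S i"
  shows "(\<forall>Y. expected_estimate n \<Omega> p f w Y = estimand n Y z1 e1 z0 e0)
    \<longleftrightarrow> (\<forall>i<n. \<forall>(z, e)\<in>S i. exposure_weight_mass \<Omega> p f w i z e = contrast_coeff n z1 e1 z0 e0 z e)"
proof -
  have "expected_estimate n \<Omega> p f w Y
      = (\<Sum>i<n. \<Sum>(z, e)\<in>S i. Y i z e * exposure_weight_mass \<Omega> p f w i z e)" for Y
    using assms(1-3) by (rule expected_estimate_eq_sum_exposure_weight_mass)
  moreover have "estimand n Y z1 e1 z0 e0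
      = (\<Sum>i<n. \<Sum>(z, e)\<in>S i. Y i z e * contrast_coeff n z1 e1 z0 e0 z e)" for Y
    using assms(2,4) by (rule estimand_eq_sum_contrast_coeff)
  ultimately show ?thesis
    using sum_pairs_linear_form_eq_iff[of "{..<n}" S "exposure_weight_mass \<Omega> p f w"
        "\<lambda>_. contrast_coeff n z1 e1 z0 e0"] assms(2)
    by (simp add: Ball_def)
qed

lemma pi_i_pos_if_exposure_weight_mass_nonzero:
  assumes "finite \<Omega>" and "\<forall>zz\<in>\<Omega>. p zz \<ge> 0"
    and "exposure_weight_mass \<Omega> p f w i z e \<noteq> 0"
  shows "0 < pi_i \<Omega> p f i z e"
proof -
  obtain zz where zz: "zz \<in> Omega_i \<Omega> f i z e" "p zz \<noteq> 0"
    using assms(3) sum.neutral unfolding exposure_weight_mass_def by force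
  have nonneg: "\<forall>x\<in>Omega_i \<Omega> f i z e. 0 \<le> p x"
    using assms(2) by (auto simp: Omega_i_def)
  have "0 < p zz"
    using zz nonneg by force
  also have "p zz \<le> pi_i \<Omega> p f i z e"
    unfolding pi_i_def using zz(1) nonneg assms(1)
    by (intro member_le_sum) (auto simp: Omega_i_def)
  finally show ?thesis .
qed

lemma pi_i_add_pi_i_le_one:
  assumes "finite \<Omega>" and "\<forall>zz\<in>\<Omega>. p zz \<ge> 0" and "(\<Sum>zz\<in>\<Omega>. p zz) = 1"
    and "(z1, e1) \<noteq> (z0, e0)"
  shows "pi_i \<Omega> p f i z1 e1 + pi_i \<Omega> p f i z0 e0 \<le> 1"
proof -
  have "pi_i \<Omega> p f i z1 e1 + pi_i \<Omega> p f i z0 e0 = (\<Sum>zz\<in>Omega_i \<Omega> f i z1 e1 \<union> Omega_i \<Omega> f i z0 e0. p zz)"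
    unfolding pi_i_def using assms(1,4)
    by (intro sum.union_disjoint[symmetric]) (auto simp: Omega_i_def)
  also have "\<dots> \<le> (\<Sum>zz\<in>\<Omega>. p zz)"
    using assms(1,2) by (intro sum_mono2) (auto simp: Omega_i_def)
  finally show ?thesis
    using assms(3) by simp
qed

lemma pi_i_strictly_between_if_exposure_weight_masses_nonzero:
  assumes "finite \<Omega>" and "\<forall>zz\<in>\<Omega>. p zz \<ge> 0" and "(\<Sum>zz\<in>\<Omega>. p zz) = 1"
    and "(z1, e1) \<noteq> (z0, e0)"
    and "exposure_weight_mass \<Omega> p f w i z1 e1 \<noteq> 0" "exposure_weight_mass \<Omega> p f w i z0 e0 \<noteq> 0"
  shows "0 < pi_i \<Omega> p f i z1 e1 \<and> pi_i \<Omega> p f i z1 e1 < 1 \<and>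
    0 < pi_i \<Omega> p f i z0 e0 \<and> pi_i \<Omega> p f i z0 e0 < 1"
  using pi_i_pos_if_exposure_weight_mass_nonzero[OF assms(1,2,5)]
    pi_i_pos_if_exposure_weight_mass_nonzero[OF assms(1,2,6)]
    pi_i_add_pi_i_le_one[OF assms(1-4), of f i]
  by linarith

lemma ball_exposures_eq_contrast_coeff_iff:
  assumes "z1 \<le> 1" "z0 \<le> 1" "e1 < k" "e0 < k" "(z1, e1) \<noteq> (z0, e0)"
  shows "(\<forall>(z, e)\<in>{..1} \<times> {..<k}. g z e = contrast_coeff n z1 e1 z0 e0 z e) \<longleftrightarrow>
    g z1 e1 = 1 / real n \<and> g z0 e0 = - (1 / real n) \<and>
    (\<forall>z\<le>1. \<forall>e<k. (z, e) \<notin> {(z0, e0), (z1, e1)} \<longrightarrow> g z e = 0)"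
proof -
  have coeff1: "contrast_coeff n z1 e1 z0 e0 z1 e1 = 1 / real n"
    and coeff0: "contrast_coeff n z1 e1 z0 e0 z0 e0 = - (1 / real n)"
    and coeff_other: "(z, e) \<notin> {(z0, e0), (z1, e1)} \<Longrightarrow> contrast_coeff n z1 e1 z0 e0 z e = 0" for z e
    using assms(5) by (auto simp: contrast_coeff_def)
  have "(\<forall>(z, e)\<in>{..1} \<times> {..<k}. g z e = contrast_coeff n z1 e1 z0 e0 z e) \<longleftrightarrow>
      (\<forall>z\<le>1. \<forall>e<k. g z e = contrast_coeff n z1 e1 z0 e0 z e)"
    by auto
  also have "\<dots> \<longleftrightarrow> g z1 e1 = 1 / real n \<and> g z0 e0 = - (1 / real n) \<and>
    (\<forall>z\<le>1. \<forall>e<k. (z, e) \<notin> {(z0, e0), (z1, e1)} \<longrightarrow> g z e = 0)"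
  proof
    assume "\<forall>z\<le>1. \<forall>e<k. g z e = contrast_coeff n z1 e1 z0 e0 z e"
    then show "g z1 e1 = 1 / real n \<and> g z0 e0 = - (1 / real n) \<and>
      (\<forall>z\<le>1. \<forall>e<k. (z, e) \<notin> {(z0, e0), (z1, e1)} \<longrightarrow> g z e = 0)"
      using assms(1-4) coeff1 coeff0 coeff_other by simp
  next
    assume conds: "g z1 e1 = 1 / real n \<and> g z0 e0 = - (1 / real n) \<and>
      (\<forall>z\<le>1. \<forall>e<k. (z, e) \<notin> {(z0, e0), (z1, e1)} \<longrightarrow> g z e = 0)"
    show "\<forall>z\<le>1. \<forall>e<k. g z e = contrast_coeff n z1 e1 z0 e0 z e"
    proof (intro allI impI)
      fix z e :: nat assume "z \<le> 1" "e < k"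
      then show "g z e = contrast_coeff n z1 e1 z0 e0 z e"
        using conds coeff1 coeff0 coeff_other
        by (cases "(z, e) \<in> {(z0, e0), (z1, e1)}") auto
    qed
  qed
  finally show ?thesis .
qed

lemma unbiased_iff_exposure_weight_conditions:
  assumes "finite \<Omega>"
    and "\<forall>i<n. \<forall>zz\<in>\<Omega>. zz i \<le> 1 \<and> f i zz < K i"
    and "z1 \<le> 1" "z0 \<le> 1" "\<forall>i<n. e1 < K i \<and> e0 < K i" "(z1, e1) \<noteq> (z0, e0)"
  shows "(\<forall>Y. expected_estimate n \<Omega> p f w Y = estimand n Y z1 e1 z0 e0) \<longleftrightarrow>
    (\<forall>i<n. exposure_weight_mass \<Omega> p f w i z1 e1 = 1 / real n \<and>
      exposure_weight_mass \<Omega> p f w i z0 e0 = - (1 / real n) \<and>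
      (\<forall>z\<le>1. \<forall>e<K i. (z, e) \<notin> {(z0, e0), (z1, e1)} \<longrightarrow> exposure_weight_mass \<Omega> p f w i z e = 0))"
    (is "_ \<longleftrightarrow> (\<forall>i<n. ?conditions i)")
proof -
  have "(\<forall>Y. expected_estimate n \<Omega> p f w Y = estimand n Y z1 e1 z0 e0) \<longleftrightarrow>
      (\<forall>i<n. \<forall>(z, e)\<in>{..1} \<times> {..<K i}.
        exposure_weight_mass \<Omega> p f w i z e = contrast_coeff n z1 e1 z0 e0 z e)"
    by (rule unbiased_iff_exposure_weight_mass_eq_contrast_coeff) (use assms in auto)
  also have "\<dots> \<longleftrightarrow> (\<forall>i<n. ?conditions i)"
  proof -
    have "(\<forall>(z, e)\<in>{..1} \<times> {..<K i}.
        exposure_weight_mass \<Omega> p f w i z e = contrast_coeff n z1 e1 z0 e0 z e) \<longleftrightarrow> ?conditions i"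
      if "i < n" for i
      using assms(5) that by (intro ball_exposures_eq_contrast_coeff_iff assms(3,4,6)) auto
    then show ?thesis
      by blast
  qed
  finally show ?thesis .
qed

theorem theorem3:
  fixes n :: nat
    and \<Omega> :: "(nat \<Rightarrow> nat) set"
    and p :: "(nat \<Rightarrow> nat) \<Rightarrow> real"
    and N :: "nat \<Rightarrow> nat set"
    and K :: "nat \<Rightarrow> nat"
    and f :: "nat \<Rightarrow> (nat \<Rightarrow> nat) \<Rightarrow> nat"
    and w :: "nat \<Rightarrow> (nat \<Rightarrow> nat) \<Rightarrow> real"
    and z1 e1 z0 e0 :: nat
  assumes n_pos: "n \<ge> 1"
    and \<Omega>_sub: "\<Omega> \<subseteq> treatment_vectors n"
    and p_nonneg: "\<forall>zz\<in>\<Omega>. p zz \<ge> 0"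
    and p_sum: "(\<Sum>zz\<in>\<Omega>. p zz) = 1"
    and N_sub: "\<forall>i<n. N i \<subseteq> {0..<n} - {i}"
    and f_local: "\<forall>i<n. \<forall>zz zz'. (\<forall>j\<in>N i. zz j = zz' j) \<longrightarrow> f i zz = f i zz'"
    and f_range: "\<forall>i<n. \<forall>zz\<in>treatment_vectors n. f i zz < K i"
    and f_onto: "\<forall>i<n. \<forall>e<K i. \<exists>zz\<in>treatment_vectors n. f i zz = e"
    and z1_bin: "z1 \<le> 1" and z0_bin: "z0 \<le> 1"
    and e_lvl: "\<forall>i<n. e1 < K i \<and> e0 < K i"
    and distinct: "(z1, e1) \<noteq> (z0, e0)"
  shows "(\<forall>Y. expected_estimate n \<Omega> p f w Y = estimand n Y z1 e1 z0 e0) \<longleftrightarrow>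
    ((\<forall>i<n. 0 < pi_i \<Omega> p f i z1 e1 \<and> pi_i \<Omega> p f i z1 e1 < 1 \<and>
            0 < pi_i \<Omega> p f i z0 e0 \<and> pi_i \<Omega> p f i z0 e0 < 1) \<and>
     (\<forall>i<n. (\<Sum>zz\<in>Omega_i \<Omega> f i z1 e1. w i zz * p zz) = 1 / real n \<and>
            (\<Sum>zz\<in>Omega_i \<Omega> f i z0 e0. w i zz * p zz) = - (1 / real n) \<and>
            (\<forall>z\<le>1. \<forall>e<K i. (z, e) \<notin> {(z0, e0), (z1, e1)} \<longrightarrow>
               (\<Sum>zz\<in>Omega_i \<Omega> f i z e. w i zz * p zz) = 0)))"
proof -
  have fin: "finite \<Omega>"
    using \<Omega>_sub finite_treatment_vectors finite_subset by blast
  have exposures: "\<forall>i<n. \<forall>zz\<in>\<Omega>. zz i \<le> 1 \<and> f i zz < K i"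
  proof (intro allI impI ballI)
    fix i zz assume "i < n" "zz \<in> \<Omega>"
    moreover from this(2) have "zz \<in> treatment_vectors n"
      using \<Omega>_sub by blast
    ultimately show "zz i \<le> 1 \<and> f i zz < K i"
      using f_range by (simp add: treatment_vectors_def)
  qed
  have positivity: "0 < pi_i \<Omega> p f i z1 e1 \<and> pi_i \<Omega> p f i z1 e1 < 1 \<and>
      0 < pi_i \<Omega> p f i z0 e0 \<and> pi_i \<Omega> p f i z0 e0 < 1"
    if "exposure_weight_mass \<Omega> p f w i z1 e1 = 1 / real n"
      "exposure_weight_mass \<Omega> p f w i z0 e0 = - (1 / real n)" for i
    using pi_i_strictly_between_if_exposure_weight_masses_nonzero[OF fin p_nonneg p_sum distinct, of f w i]
      that n_pos by simp
  show ?thesis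
    unfolding exposure_weight_mass_def[symmetric]
      unbiased_iff_exposure_weight_conditions[OF fin exposures z1_bin z0_bin e_lvl distinct]
    using positivity by blast
qed

end
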